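(* Let $i,m,n\in\mathbb{N}_0$ with $m<n+i$, and let \[ \mathcal{F}_{i,m,n}=\{p(x)+x^i\ln(x)q(x):\ p\in\Pi_m,\ q\in\Pi_n\}, \] considered as functions on $(1,\infty)$. Then every nonzero $f\in\mathcal{F}_{i,m,n}$ has at most $2n+i$ distinct zeros in $(1,\infty)$. In particular, if $m=n+i-1$, every nonzero $f\in\mathcal{F}_{i,m,n}$ has fewer than $m+n+2$ distinct zeros in $(1,\infty)$.
   Context: $\Pi_n$ denotes the space of real polynomials of degree at most $n$. *)

theory Defs
  imports Complex_Main "HOL-Computational_Algebra.Polynomial"
begin

definition Ffun :: "nat \<Rightarrow> real poly \<Rightarrow> real poly \<Rightarrow> real \<Rightarrow> real" where
  "Ffun i p q x = poly p x + x ^ i * ln x * poly q x"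

end

theory Submission
  imports Defs "HOL-Analysis.Analysis"
begin

text \<open>Write f = p + ln x * r with r = x^i q, i.e. f is a sum of terms (u_d + v_d ln x) x^d over
  d \<le> D = n + i, where u_D = 0 (as m < D) and v_d = 0 for d < i. Differentiation keeps this shape
  while lowering all exponents by one; a term loses its logarithm when its exponent passes through 0,
  and a term without logarithm dies there. So the D-th derivative of f consists of v_D (a + b ln x)
  and of terms x^(d - D) without logarithm, i \<le> d < D. Multiplying by x^n and differentiating n
  more times kills these as well and leaves v_D (a' + b' ln x) with a' \<ge> 0 and b' > 0, which has
  no zero in (1, \<infinity>) unless v_D = 0. By Rolle's theorem each of the D + n = 2n + i
  derivatives loses at most one zero.\<close>

definition at_most_zeros_on :: "real set \<Rightarrow> nat \<Rightarrow> (real \<Rightarrow> real) \<Rightarrow> bool" where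
  "at_most_zeros_on S N g \<longleftrightarrow>
     (\<forall>x\<in>S. g x = 0) \<or> finite {x\<in>S. g x = 0} \<and> card {x\<in>S. g x = 0} \<le> N"

lemma at_most_zeros_on_if_no_zeros:
  assumes "\<forall>x\<in>S. g x \<noteq> 0"
  shows "at_most_zeros_on S N g"
proof -
  have no_zeros: "{x\<in>S. g x = 0} = {}"
    using assms by blast
  show ?thesis
    unfolding at_most_zeros_on_def no_zeros by simp
qed

lemma rolle_card_zeros:
  fixes g g' :: "real \<Rightarrow> real" and A :: "real set"
  assumes "finite A" "A \<noteq> {}" "\<forall>a\<in>A. g a = 0"
    and "\<And>x. Min A \<le> x \<Longrightarrow> x \<le> Max A \<Longrightarrow> (g has_real_derivative g' x) (at x)"
  shows "\<exists>B \<subseteq> {Min A<..<Max A}. (\<forall>b\<in>B. g' b = 0) \<and> finite B \<and> card A = Suc (card B)"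
  using assms
proof (induction A rule: finite_linorder_max_induct)
  case empty
  then show ?case by simp
next
  case (insert b A)
  show ?case
  proof (cases "A = {}")
    case True
    then show ?thesis by auto
  next
    case False
    have "Min A \<le> Max A" "Max A < b" "Min A < b"
      using insert.hyps False by simp_all
    then have Max_eq: "Max (insert b A) = b" and Min_eq: "Min (insert b A) = Min A"
      using insert.hyps False by (simp_all add: Max_insert Min_insert)
    obtain B where B: "B \<subseteq> {Min A<..<Max A}" "\<forall>b\<in>B. g' b = 0" "finite B" "card A = Suc (card B)"
      using insert.IH False insert.prems \<open>Max A < b\<close> by (auto simp: Max_eq Min_eq)
    obtain z where z: "Max A < z" "z < b" "g b - g (Max A) = (b - Max A) * g' z"
      using MVT2[OF \<open>Max A < b\<close>, of g g'] insert.prems Max_eq Min_eq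
      by (metis Max_in False Min_le insert.hyps(1) order.trans)
    have "g' z = 0"
      using z insert.prems(2) Max_in[OF insert.hyps(1) False] by simp
    moreover have "z \<notin> B"
      using B(1) z(1) by auto
    moreover have "b \<notin> A"
      using insert.hyps by auto
    moreover have "insert z B \<subseteq> {Min A<..<b}"
      using B(1) z(1,2) \<open>Min A \<le> Max A\<close> by auto
    ultimately show ?thesis
      using B insert.hyps(1) unfolding Max_eq Min_eq
      by (intro exI[of _ "insert z B"]) simp
  qed
qed

lemma at_most_zeros_on_deriv:
  fixes g g' :: "real \<Rightarrow> real"
  assumes S: "connected S"
    and deriv: "\<And>x. x \<in> S \<Longrightarrow> (g has_real_derivative g' x) (at x)"
    and "at_most_zeros_on S N g'"
  shows "at_most_zeros_on S (Suc N) g"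
proof (cases "\<forall>x\<in>S. g' x = 0")
  case True
  have "(g has_real_derivative 0) (at x within S)" if "x \<in> S" for x
  proof -
    have "(g has_real_derivative g' x) (at x within S)"
      using deriv[OF that] by (rule has_field_derivative_at_within)
    then show ?thesis
      using True that by simp
  qed
  moreover have "convex S"
    using S connected_convex_1 by blast
  ultimately obtain c where "\<forall>x\<in>S. g x = c"
    using has_field_derivative_zero_constant[of S g] by blast
  then show ?thesis
  proof (cases "c = 0")
    case False
    with \<open>\<forall>x\<in>S. g x = c\<close> show ?thesis
      by (simp add: at_most_zeros_on_if_no_zeros)
  qed (simp add: at_most_zeros_on_def)
next
  case False
  with assms(3) have zeros': "finite {x\<in>S. g' x = 0}" "card {x\<in>S. g' x = 0} \<le> N"
    unfolding at_most_zeros_on_def by blast+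
  have "finite {x\<in>S. g x = 0} \<and> card {x\<in>S. g x = 0} \<le> Suc N"
  proof (rule finite_if_finite_subsets_card_bdd)
    fix A assume A: "A \<subseteq> {x\<in>S. g x = 0}" "finite A"
    show "card A \<le> Suc N"
    proof (cases "A = {}")
      case False
      have between: "x \<in> S" if "Min A \<le> x" "x \<le> Max A" for x
      proof (rule connectedD_interval[OF S _ _ that])
        show "Min A \<in> S" "Max A \<in> S"
          using Min_in[OF A(2) False] Max_in[OF A(2) False] A(1) by blast+
      qed
      have zeros: "\<forall>a\<in>A. g a = 0"
        using A(1) by blast
      have "(g has_real_derivative g' x) (at x)" if "Min A \<le> x" "x \<le> Max A" for x
        using deriv[OF between[OF that]] .
      then obtain B where B: "B \<subseteq> {Min A<..<Max A}" "\<forall>b\<in>B. g' b = 0" "finite B"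
          "card A = Suc (card B)"
        using rolle_card_zeros[OF A(2) False zeros] by metis
      have "B \<subseteq> {x\<in>S. g' x = 0}"
      proof
        fix b assume "b \<in> B"
        then have "Min A \<le> b" "b \<le> Max A" "g' b = 0"
          using B(1,2) by auto
        then show "b \<in> {x\<in>S. g' x = 0}"
          using between by blast
      qed
      then have "card B \<le> N"
        using card_mono[OF zeros'(1)] zeros'(2) by (meson order_trans)
      then show ?thesis
        using B(4) by simp
    qed simp
  qed
  then show ?thesis
    by (simp add: at_most_zeros_on_def)
qed

lemma at_most_zeros_on_cong:
  assumes "\<And>x. x \<in> S \<Longrightarrow> h x = 0 \<longleftrightarrow> g x = 0" "at_most_zeros_on S N g"
  shows "at_most_zeros_on S N h"
proof -
  have "{x\<in>S. h x = 0} = {x\<in>S. g x = 0}"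
    using assms(1) by blast
  then show ?thesis
    using assms by (simp add: at_most_zeros_on_def)
qed

lemma at_most_zeros_on_scaled_log:
  assumes "0 \<le> s" "0 < t"
  shows "at_most_zeros_on {1<..} 0 (\<lambda>x. \<beta> * (s + ln x * t))"
proof (cases "\<beta> = 0")
  case True
  then show ?thesis
    by (simp add: at_most_zeros_on_def)
next
  case False
  have "s + ln x * t \<noteq> 0" if "x > 1" for x
    using assms that by (simp add: add_nonneg_pos less_imp_neq[symmetric])
  with False show ?thesis
    by (intro at_most_zeros_on_if_no_zeros) simp
qed

definition log_power_sum :: "nat \<Rightarrow> nat \<Rightarrow> (nat \<Rightarrow> real \<times> real) \<Rightarrow> real \<Rightarrow> real" where
  "log_power_sum D k c x = (\<Sum>d\<le>D. (fst (c d) + ln x * snd (c d)) * x powr (real d - real k))"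

lemma poly_eq_sum_coeffs_le:
  fixes p :: "'a::comm_semiring_1 poly"
  assumes "degree p \<le> D"
  shows "poly p x = (\<Sum>d\<le>D. coeff p d * x ^ d)"
proof -
  have "poly p x = poly (\<Sum>d\<le>D. monom (coeff p d) d) x"
    by (simp only: poly_as_sum_of_monoms'[OF assms])
  then show ?thesis
    by (simp add: poly_sum poly_monom)
qed

lemma poly_log_eq_log_power_sum:
  fixes p r :: "real poly"
  assumes "degree p \<le> D" "degree r \<le> D" "x > 0"
  shows "poly p x + ln x * poly r x = log_power_sum D 0 (\<lambda>d. (coeff p d, coeff r d)) x"
proof -
  have "poly p x + ln x * poly r x = (\<Sum>d\<le>D. coeff p d * x ^ d) + ln x * (\<Sum>d\<le>D. coeff r d * x ^ d)"
    using assms(1,2) by (simp add: poly_eq_sum_coeffs_le)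
  then show ?thesis
    unfolding log_power_sum_def using assms(3)
    by (simp add: sum_distrib_left sum.distrib[symmetric] powr_realpow algebra_simps)
qed

text \<open>The derivative of (u + v ln x) x^(d - k) is ((d - k) u + v + (d - k) v ln x) x^(d - k - 1).\<close>

fun diff_coeff :: "nat \<Rightarrow> nat \<Rightarrow> real \<times> real \<Rightarrow> real \<times> real" where
  "diff_coeff k d (u, v) = ((real d - real k) * u + v, (real d - real k) * v)"

primrec diff_coeffs :: "nat \<Rightarrow> nat \<Rightarrow> nat \<Rightarrow> real \<times> real \<Rightarrow> real \<times> real" where
  "diff_coeffs k 0 d uv = uv"
| "diff_coeffs k (Suc j) d uv = diff_coeffs (Suc k) j d (diff_coeff k d uv)"

lemma has_real_derivative_log_power_sum:
  assumes "x > 0"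
  shows "(log_power_sum D k c has_real_derivative
           log_power_sum D (Suc k) (\<lambda>d. diff_coeff k d (c d)) x) (at x)"
  unfolding log_power_sum_def
proof (rule DERIV_sum)
  fix d
  obtain u v where c: "c d = (u, v)"
    by force
  have "x powr (real d - real (Suc k)) = x powr (real d - real k) / x"
    using assms by (simp add: powr_diff diff_diff_eq[symmetric])
  then show "((\<lambda>x. (fst (c d) + ln x * snd (c d)) * x powr (real d - real k)) has_real_derivative
      (fst (diff_coeff k d (c d)) + ln x * snd (diff_coeff k d (c d)))
        * x powr (real d - real (Suc k))) (at x)"
    unfolding c using assms
    by (auto intro!: derivative_eq_intros simp: powr_diff field_simps)
qed

lemma at_most_zeros_on_log_power_sum_diff_coeffs:
  assumes "connected S" "S \<subseteq> {0<..}"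
    and "at_most_zeros_on S N (log_power_sum D (k + j) (\<lambda>d. diff_coeffs k j d (c d)))"
  shows "at_most_zeros_on S (N + j) (log_power_sum D k c)"
  using assms(3)
proof (induction j arbitrary: k c N)
  case 0
  then show ?case by simp
next
  case (Suc j)
  have "at_most_zeros_on S (N + j) (log_power_sum D (Suc k) (\<lambda>d. diff_coeff k d (c d)))"
    using Suc.IH[where k = "Suc k" and c = "\<lambda>d. diff_coeff k d (c d)"] Suc.prems by simp
  then have "at_most_zeros_on S (Suc (N + j)) (log_power_sum D k c)"
    using assms(1,2) has_real_derivative_log_power_sum by (blast intro: at_most_zeros_on_deriv)
  then show ?case by simp
qed

lemma log_power_sum_shift:
  assumes "x > 0"
  shows "log_power_sum D k c x = x powr real j * log_power_sum D (k + j) c x"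
  unfolding log_power_sum_def sum_distrib_left
  using assms by (intro sum.cong refl) (simp add: powr_add[symmetric] algebra_simps)

lemma log_power_sum_top:
  assumes "x > 0" "\<And>d. d < D \<Longrightarrow> c d = (0, 0)"
  shows "log_power_sum D D c x = fst (c D) + ln x * snd (c D)"
proof -
  have "log_power_sum D D c x = (\<Sum>d\<in>{D}. (fst (c d) + ln x * snd (c d)) * x powr (real d - real D))"
    unfolding log_power_sum_def using assms(2) by (intro sum.mono_neutral_right) auto
  then show ?thesis
    using assms(1) by simp
qed

lemma diff_coeffs_zero: "diff_coeffs k j d (0, 0) = (0, 0)"
  by (induction j arbitrary: k) auto

lemma snd_diff_coeffs_no_log: "snd uv = 0 \<Longrightarrow> snd (diff_coeffs k j d uv) = 0"
proof (induction j arbitrary: k uv)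
  case (Suc j)
  then show ?case
    by (cases uv) simp
qed simp

lemma diff_coeffs_no_log_vanish:
  "snd uv = 0 \<Longrightarrow> k \<le> d \<Longrightarrow> d < k + j \<Longrightarrow> diff_coeffs k j d uv = (0, 0)"
proof (induction j arbitrary: k uv)
  case (Suc j)
  then show ?case
    by (cases uv; cases "k = d") (simp_all add: diff_coeffs_zero)
qed simp

lemma snd_diff_coeffs_vanish:
  "k \<le> d \<Longrightarrow> d < k + j \<Longrightarrow> snd (diff_coeffs k j d uv) = 0"
proof (induction j arbitrary: k uv)
  case (Suc j)
  then show ?case
    by (cases uv; cases "k = d") (simp_all add: snd_diff_coeffs_no_log)
qed simp

lemma diff_coeffs_scale:
  "diff_coeffs k j d (\<beta> * u, \<beta> * v) =
     (\<beta> * fst (diff_coeffs k j d (u, v)), \<beta> * snd (diff_coeffs k j d (u, v)))"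
proof (induction j arbitrary: k u v)
  case (Suc j)
  have "diff_coeff k d (\<beta> * u, \<beta> * v) =
      (\<beta> * fst (diff_coeff k d (u, v)), \<beta> * snd (diff_coeff k d (u, v)))"
    by (simp add: algebra_simps)
  then show ?case
    by (simp only: diff_coeffs.simps Suc.IH prod.collapse)
qed simp

lemma diff_coeffs_nonneg_pos:
  "k + j \<le> d \<Longrightarrow> 0 \<le> u \<Longrightarrow> 0 < v \<Longrightarrow>
     0 \<le> fst (diff_coeffs k j d (u, v)) \<and> 0 < snd (diff_coeffs k j d (u, v))"
proof (induction j arbitrary: k u v)
  case (Suc j)
  then have "0 < real d - real k"
    by simp
  then show ?case
    using Suc by simp
qed simp

lemma diff_coeffs_two_phases_vanish:
  assumes "d < n + i" "d < i \<Longrightarrow> snd uv = 0"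
  shows "diff_coeffs i n d (diff_coeffs 0 (n + i) d uv) = (0, 0)"
proof (cases "d < i")
  case True
  then show ?thesis
    using assms by (simp add: diff_coeffs_no_log_vanish diff_coeffs_zero)
next
  case False
  then show ?thesis
    using assms(1) by (simp add: diff_coeffs_no_log_vanish snd_diff_coeffs_vanish)
qed

lemma diff_coeffs_two_phases_top:
  obtains s t where "0 \<le> s" "0 < t"
    "diff_coeffs i n (n + i) (diff_coeffs 0 (n + i) (n + i) (0, \<beta>)) = (\<beta> * s, \<beta> * t)"
proof -
  define s1 where "s1 = fst (diff_coeffs 0 (n + i) (n + i) (0, 1))"
  define t1 where "t1 = snd (diff_coeffs 0 (n + i) (n + i) (0, 1))"
  define s2 where "s2 = fst (diff_coeffs i n (n + i) (s1, t1))"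
  define t2 where "t2 = snd (diff_coeffs i n (n + i) (s1, t1))"
  have "0 \<le> s1" "0 < t1"
    using diff_coeffs_nonneg_pos[of 0 "n + i" "n + i" 0 1] by (simp_all add: s1_def t1_def)
  then have "0 \<le> s2" "0 < t2"
    using diff_coeffs_nonneg_pos[of i n "n + i" s1 t1] by (simp_all add: s2_def t2_def)
  moreover have "(0, \<beta>) = (\<beta> * 0, \<beta> * 1)"
    by simp
  then have "diff_coeffs i n (n + i) (diff_coeffs 0 (n + i) (n + i) (0, \<beta>)) = (\<beta> * s2, \<beta> * t2)"
    unfolding s1_def t1_def s2_def t2_def by (simp only: diff_coeffs_scale)
  ultimately show ?thesis
    using that by blast
qed

lemma at_most_zeros_on_log_power_sum:
  assumes low: "\<And>d. d < i \<Longrightarrow> snd (c d) = 0" and top: "c (n + i) = (0, \<beta>)"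
  shows "at_most_zeros_on {1<..} (2 * n + i) (log_power_sum (n + i) 0 c)"
proof -
  define D where "D = n + i"
  define c1 where "c1 = (\<lambda>d. diff_coeffs 0 D d (c d))"
  define c2 where "c2 = (\<lambda>d. diff_coeffs i n d (c1 d))"
  have "i + n = D"
    by (simp add: D_def)
  obtain s t where "0 \<le> s" "0 < t" and c2_top: "c2 D = (\<beta> * s, \<beta> * t)"
    using diff_coeffs_two_phases_top[where i = i and n = n and \<beta> = \<beta>]
    unfolding c2_def c1_def D_def top by metis
  have c2_low: "c2 d = (0, 0)" if "d < D" for d
    unfolding c2_def c1_def D_def using that low by (simp add: D_def diff_coeffs_two_phases_vanish)
  have c2_sum: "log_power_sum D D c2 x = \<beta> * (s + ln x * t)" if "x > 1" for x
    using log_power_sum_top[of x D c2, OF _ c2_low] that c2_top by (simp add: algebra_simps)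
  have "at_most_zeros_on {1<..} 0 (log_power_sum D D c2)"
    by (rule at_most_zeros_on_cong[OF _ at_most_zeros_on_scaled_log[OF \<open>0 \<le> s\<close> \<open>0 < t\<close>]])
      (simp add: c2_sum)
  then have "at_most_zeros_on {1<..} n (log_power_sum D i c1)"
    using at_most_zeros_on_log_power_sum_diff_coeffs[of "{1<..}" 0 D i n c1]
    unfolding c2_def[symmetric] \<open>i + n = D\<close> by simp
  then have "at_most_zeros_on {1<..} n (log_power_sum D D c1)"
  proof (rule at_most_zeros_on_cong[rotated])
    fix x :: real assume "x \<in> {1<..}"
    then have "log_power_sum D i c1 x = x powr real n * log_power_sum D D c1 x"
      using log_power_sum_shift[of x D i c1 n] \<open>i + n = D\<close> by simp
    then show "log_power_sum D D c1 x = 0 \<longleftrightarrow> log_power_sum D i c1 x = 0"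
      using \<open>x \<in> {1<..}\<close> by simp
  qed
  then have "at_most_zeros_on {1<..} (n + D) (log_power_sum D 0 c)"
    using at_most_zeros_on_log_power_sum_diff_coeffs[of "{1<..}" n D 0 D c]
    unfolding c1_def[symmetric] by simp
  moreover have "2 * n + i = n + D"
    by (simp add: D_def)
  ultimately show ?thesis
    unfolding D_def[symmetric] by (simp only:)
qed

theorem mainTheorem9:
  fixes i m n :: nat and p q :: "real poly"
  assumes "m < n + i"
    and "degree p \<le> m" and "degree q \<le> n"
    and "\<exists>x>1. Ffun i p q x \<noteq> 0"
  shows "finite {x. x > 1 \<and> Ffun i p q x = 0}
         \<and> card {x. x > 1 \<and> Ffun i p q x = 0} \<le> 2 * n + i
         \<and> (m = n + i - 1 \<longrightarrow> card {x. x > 1 \<and> Ffun i p q x = 0} < m + n + 2)"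
proof -
  define r where "r = monom 1 i * q"
  define c where "c = (\<lambda>d. (coeff p d, coeff r d))"
  have "degree r \<le> n + i"
    unfolding r_def using assms(3) degree_mult_le[of "monom 1 i" q] degree_monom_le[of "1::real" i]
    by linarith
  then have Ffun_eq: "Ffun i p q x = log_power_sum (n + i) 0 c x" if "x > 1" for x
    using poly_log_eq_log_power_sum[of p "n + i" r x] assms(1,2) that
    by (simp add: Ffun_def c_def r_def poly_monom mult_ac)
  have "at_most_zeros_on {1<..} (2 * n + i) (log_power_sum (n + i) 0 c)"
    using assms(1,2)
    by (intro at_most_zeros_on_log_power_sum[where \<beta> = "coeff q n"])
      (simp_all add: c_def r_def coeff_monom_mult coeff_eq_0)
  then have "at_most_zeros_on {1<..} (2 * n + i) (Ffun i p q)"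
    by (rule at_most_zeros_on_cong[rotated]) (simp add: Ffun_eq)
  with assms(4) have "finite {x\<in>{1<..}. Ffun i p q x = 0} \<and> card {x\<in>{1<..}. Ffun i p q x = 0} \<le> 2 * n + i"
    unfolding at_most_zeros_on_def by auto
  then show ?thesis
    by auto
qed

end
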